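(* Let $n,k,m_1,m_2$ be integers with $k\ge1$ and $0\le m_2<m_1\le n-k$, and put $$R_3(\varepsilon)=\frac{n!\,(1+\varepsilon)_{m_1-m_2-1}\,(1-2\varepsilon)_{k+m_2}\,(1-\varepsilon)_{n-m_1-1}}{(1-\varepsilon)_n\,(1-2\varepsilon)_{k-1}\,(1-\varepsilon)_{k+m_1}\,(1+\varepsilon)_{n-k-m_1}}.$$ Then for every integer $H\ge0$ the number $d_n^{H+1}\frac1{H!}\frac{\partial^H}{\partial\varepsilon^H}R_3(\varepsilon)\big|_{\varepsilon=0}$ is an integer.
   Context: $(x)_m=x(x+1)\cdots(x+m-1)$, $(x)_0=1$; $d_n=\operatorname{lcm}(1,\dots,n)$. *)

theory Defs
  imports "HOL-Analysis.Analysis"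
begin

definition dlcm :: "nat \<Rightarrow> nat" where
  "dlcm n = Lcm {1..n}"

definition R3 :: "nat \<Rightarrow> nat \<Rightarrow> nat \<Rightarrow> nat \<Rightarrow> real \<Rightarrow> real" where
  "R3 n k m1 m2 e =
     (fact n * pochhammer (1 + e) (m1 - m2 - 1) * pochhammer (1 - 2*e) (k + m2)
        * pochhammer (1 - e) (n - m1 - 1))
     / (pochhammer (1 - e) n * pochhammer (1 - 2*e) (k - 1)
        * pochhammer (1 - e) (k + m1) * pochhammer (1 + e) (n - k - m1))"

end

theory Submission
  imports Defs "HOL-Analysis.FPS_Convergence"
begin

(* Write every Pochhammer symbol (1 + c e)_m as m! times the product of the factors 1 + (c/j) e
   with j \<le> m.  For c \<in> \<int> and j \<le> n the h-th Taylor coefficient of such a factor, and of its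
   inverse, becomes an integer after multiplication by d_n^h, and this property survives products.
   The remaining constant is R_3(0) = C(n-m1-1, k-1) * a! r! / (a+r+1)! with a = m1-m2-1,
   r = k+m2, a+r+1 = k+m1 \<le> n, and d_n times the Beta value a! r! / (a+r+1)! is an integer by
   induction on r along B(a, r+1) = B(a, r) - B(a+1, r). *)

lemma fps_nth_conv_higher_deriv_real:
  fixes F :: "real fps"
  assumes "fps_conv_radius F > 0"
  shows "fps_nth F n = (deriv ^^ n) (eval_fps F) 0 / fact n"
  using assms
proof (induction n arbitrary: F)
  case 0
  then show ?case by (simp add: eval_fps_def)
next
  case (Suc n F)
  have "eventually (\<lambda>z::real. z \<in> eball 0 (fps_conv_radius F)) (nhds 0)"
    using Suc.prems by (intro eventually_nhds_in_open) (auto simp: zero_ereal_def)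
  then have "eventually (\<lambda>z. deriv (eval_fps F) z = eval_fps (fps_deriv F) z) (nhds 0)"
    by eventually_elim (simp add: eval_fps_deriv)
  then have "(deriv ^^ Suc n) (eval_fps F) 0 = (deriv ^^ n) (eval_fps (fps_deriv F)) 0"
    unfolding funpow_Suc_right o_def by (intro higher_deriv_cong_ev refl)
  also have "\<dots> / fact n = fps_nth (fps_deriv F) n"
    using Suc.prems fps_conv_radius_deriv [of F] by (intro Suc.IH [symmetric]) auto
  also have "\<dots> / of_nat (Suc n) = fps_nth F (Suc n)"
    by (simp add: fps_deriv_def del: of_nat_Suc)
  finally show ?case by (simp add: field_split_simps)
qed

lemma fps_nth_fps_expansion_real:
  fixes f :: "real \<Rightarrow> real"
  assumes "f has_fps_expansion F"
  shows "fps_nth F n = (deriv ^^ n) f 0 / fact n"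
proof -
  have "fps_nth F n = (deriv ^^ n) (eval_fps F) 0 / fact n"
    using assms by (intro fps_nth_conv_higher_deriv_real) (auto simp: has_fps_expansion_def)
  also have "(deriv ^^ n) (eval_fps F) 0 = (deriv ^^ n) f 0"
    using assms by (intro higher_deriv_cong_ev) (auto simp: has_fps_expansion_def)
  finally show ?thesis .
qed

definition fps_scaled_integer :: "real \<Rightarrow> nat \<Rightarrow> real fps \<Rightarrow> bool" where
  "fps_scaled_integer D m F \<longleftrightarrow> (\<forall>h. D ^ (h + m) * fps_nth F h \<in> \<int>)"

lemma fps_scaled_integer_one: "fps_scaled_integer D 0 1"
  by (simp add: fps_scaled_integer_def)

lemma fps_scaled_integer_const: "D * c \<in> \<int> \<Longrightarrow> fps_scaled_integer D 1 (fps_const c)"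
  by (simp add: fps_scaled_integer_def)

lemma fps_scaled_integer_linear:
  assumes "D * b \<in> \<int>"
  shows "fps_scaled_integer D 0 (1 + fps_const b * fps_X)"
  unfolding fps_scaled_integer_def
proof
  fix h
  show "D ^ (h + 0) * fps_nth (1 + fps_const b * fps_X) h \<in> \<int>"
    using assms by (cases h) auto
qed

lemma fps_scaled_integer_mult:
  assumes "fps_scaled_integer D a F" and "fps_scaled_integer D b G"
  shows "fps_scaled_integer D (a + b) (F * G)"
  unfolding fps_scaled_integer_def
proof
  fix h
  have "D ^ (h + (a + b)) = D ^ (i + a) * D ^ (h - i + b)" if "i \<le> h" for i
  proof -
    have "h + (a + b) = (i + a) + (h - i + b)"
      using that by simp
    then show ?thesis
      unfolding power_add [symmetric] by (rule arg_cong)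
  qed
  then have "D ^ (h + (a + b)) * fps_nth (F * G) h =
      (\<Sum>i=0..h. (D ^ (i + a) * fps_nth F i) * (D ^ (h - i + b) * fps_nth G (h - i)))"
    by (auto simp: fps_mult_nth sum_distrib_left mult_ac intro!: sum.cong)
  also have "\<dots> \<in> \<int>"
  proof -
    have F: "D ^ (i + a) * fps_nth F i \<in> \<int>" and G: "D ^ (j + b) * fps_nth G j \<in> \<int>" for i j
      using assms by (simp_all add: fps_scaled_integer_def)
    show ?thesis
      by (intro Ints_sum Ints_mult [OF F G])
  qed
  finally show "D ^ (h + (a + b)) * fps_nth (F * G) h \<in> \<int>" .
qed

lemma fps_scaled_integer_prod:
  assumes "\<And>i. i \<in> A \<Longrightarrow> fps_scaled_integer D 0 (F i)"
  shows "fps_scaled_integer D 0 (\<Prod>i\<in>A. F i)"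
  using assms
proof (induction A rule: infinite_finite_induct)
  case (insert x A)
  then show ?case using fps_scaled_integer_mult [of D 0 "F x" 0] by simp
qed (simp_all add: fps_scaled_integer_one)

lemma fps_scaled_integer_inverse:
  assumes "fps_scaled_integer D 0 F" and "fps_nth F 0 = 1"
  shows "fps_scaled_integer D 0 (inverse F)"
proof -
  have F: "D ^ i * fps_nth F i \<in> \<int>" for i
    using assms(1) by (simp add: fps_scaled_integer_def)
  have "D ^ h * fps_nth (inverse F) h \<in> \<int>" for h
  proof (induction h rule: less_induct)
    case (less h)
    show ?case
    proof (cases h)
      case (Suc m)
      have "fps_nth (inverse F) h = - (\<Sum>i=1..h. fps_nth F i * fps_nth (inverse F) (h - i))"
        using assms(2) Suc by (simp add: fps_inverse_def)
      then have "D ^ h * fps_nth (inverse F) h =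
          - (\<Sum>i=1..h. (D ^ i * fps_nth F i) * (D ^ (h - i) * fps_nth (inverse F) (h - i)))"
        by (auto simp: sum_distrib_left mult_ac simp flip: power_add intro!: sum.cong)
      also have "\<dots> \<in> \<int>"
        by (auto intro!: Ints_minus Ints_mult [OF F less.IH])
      finally show ?thesis .
    qed (simp add: assms(2))
  qed
  then show ?thesis by (simp add: fps_scaled_integer_def)
qed

definition has_scaled_integer_expansion :: "real \<Rightarrow> (real \<Rightarrow> real) \<Rightarrow> bool" where
  "has_scaled_integer_expansion D f \<longleftrightarrow> (\<exists>F. f has_fps_expansion F \<and> fps_scaled_integer D 0 F)"

lemma has_scaled_integer_expansion_mult:
  assumes "has_scaled_integer_expansion D f" and "has_scaled_integer_expansion D g"
  shows "has_scaled_integer_expansion D (\<lambda>x. f x * g x)"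
proof -
  obtain F G where "f has_fps_expansion F" "fps_scaled_integer D 0 F"
      "g has_fps_expansion G" "fps_scaled_integer D 0 G"
    using assms unfolding has_scaled_integer_expansion_def by blast
  then show ?thesis
    unfolding has_scaled_integer_expansion_def
    using fps_scaled_integer_mult [of D 0 F 0 G] by (auto intro: has_fps_expansion_mult)
qed

lemma has_scaled_integer_expansion_divide:
  assumes "has_scaled_integer_expansion D f" and "has_scaled_integer_expansion D g"
    and "g 0 = 1"
  shows "has_scaled_integer_expansion D (\<lambda>x. f x / g x)"
proof -
  obtain F G where F: "f has_fps_expansion F" "fps_scaled_integer D 0 F"
      and G: "g has_fps_expansion G" "fps_scaled_integer D 0 G"
    using assms unfolding has_scaled_integer_expansion_def by blast
  have "fps_nth G 0 = 1"
    using G(1) assms(3)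
    by (auto simp: has_fps_expansion_def eval_fps_at_0 dest: eventually_nhds_x_imp_x)
  then have "(\<lambda>x. f x * inverse (g x)) has_fps_expansion F * inverse G"
      and "fps_scaled_integer D 0 (F * inverse G)"
    using F G fps_scaled_integer_mult [of D 0 F 0 "inverse G"] fps_scaled_integer_inverse
    by (auto intro!: has_fps_expansion_mult has_fps_expansion_inverse)
  then show ?thesis
    unfolding has_scaled_integer_expansion_def divide_inverse by blast
qed

lemma higher_deriv_cmult_scaled_integer:
  assumes "f = (\<lambda>x. c * g x)" and "D * c \<in> \<int>" and "has_scaled_integer_expansion D g"
  shows "D ^ (H + 1) * ((deriv ^^ H) f 0 / fact H) \<in> \<int>"
proof -
  obtain G where "g has_fps_expansion G" "fps_scaled_integer D 0 G"
    using assms(3) unfolding has_scaled_integer_expansion_def by blast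
  then have "f has_fps_expansion fps_const c * G" and "fps_scaled_integer D 1 (fps_const c * G)"
    using fps_scaled_integer_mult [OF fps_scaled_integer_const [OF assms(2)]] assms(1)
    by (auto intro: has_fps_expansion_cmult_left)
  then show ?thesis
    unfolding fps_scaled_integer_def by (simp flip: fps_nth_fps_expansion_real)
qed

definition normalized_pochhammer :: "real \<Rightarrow> nat \<Rightarrow> real \<Rightarrow> real" where
  "normalized_pochhammer c m x = pochhammer (1 + c * x) m / fact m"

lemma normalized_pochhammer_eq_prod:
  "normalized_pochhammer c m x = (\<Prod>i<m. 1 + c / real (Suc i) * x)"
proof -
  have "pochhammer (1 + c * x) m = (\<Prod>i<m. real (Suc i) * (1 + c / real (Suc i) * x))"
    unfolding pochhammer_prod lessThan_atLeast0 [symmetric]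
    by (intro prod.cong refl) (simp add: field_simps)
  then show ?thesis
    by (simp add: normalized_pochhammer_def prod.distrib fact_prod_Suc lessThan_atLeast0)
qed

lemma normalized_pochhammer_0 [simp]: "normalized_pochhammer c m 0 = 1"
  by (simp add: normalized_pochhammer_eq_prod)

lemma dlcm_divide_in_Ints:
  assumes "1 \<le> j" and "j \<le> n"
  shows "real (dlcm n) / real j \<in> \<int>"
proof -
  have "j dvd dlcm n"
    unfolding dlcm_def using assms by (intro dvd_Lcm) auto
  then show ?thesis
    by (simp add: real_of_nat_div [symmetric])
qed

lemma has_scaled_integer_expansion_normalized_pochhammer:
  assumes "c \<in> \<int>" and "m \<le> n"
  shows "has_scaled_integer_expansion (dlcm n) (normalized_pochhammer c m)"
  unfolding has_scaled_integer_expansion_def normalized_pochhammer_eq_prod [abs_def]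
proof (intro exI conjI)
  show "(\<lambda>x. \<Prod>i<m. 1 + c / real (Suc i) * x) has_fps_expansion
      (\<Prod>i<m. 1 + fps_const (c / real (Suc i)) * fps_X)"
    by (intro has_fps_expansion_prod has_fps_expansion_add has_fps_expansion_1
        has_fps_expansion_cmult_left has_fps_expansion_fps_X)
  have "real (dlcm n) * (c / real (Suc i)) \<in> \<int>" if "i < m" for i
  proof -
    have "real (dlcm n) / real (Suc i) \<in> \<int>"
      using assms(2) that by (intro dlcm_divide_in_Ints) auto
    from Ints_mult [OF this assms(1)] show ?thesis
      by simp
  qed
  then show "fps_scaled_integer (dlcm n) 0 (\<Prod>i<m. 1 + fps_const (c / real (Suc i)) * fps_X)"
    by (intro fps_scaled_integer_prod fps_scaled_integer_linear) auto
qed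

lemma beta_recurrence:
  "(fact a * fact (Suc r) / fact (a + Suc r + 1) :: real) =
     fact a * fact r / fact (a + r + 1) - fact (Suc a) * fact r / fact (Suc a + r + 1)"
proof -
  define N :: real where "N = fact (a + r + 1)"
  define M :: real where "M = real a + real r + 2"
  have "fact (a + Suc r + 1) = M * N" "fact (Suc a + r + 1) = M * N"
    unfolding N_def M_def by (simp_all add: algebra_simps)
  moreover have "N > 0" "M > 0"
    unfolding N_def M_def by simp_all
  ultimately show ?thesis
    unfolding fact_Suc [of a] fact_Suc [of r] N_def [symmetric]
    by (simp add: divide_simps del: fact_Suc) (simp add: M_def algebra_simps)
qed

lemma dlcm_mult_beta_in_Ints:
  assumes "a + r + 1 \<le> n"
  shows "real (dlcm n) * (fact a * fact r / fact (a + r + 1)) \<in> \<int>"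
  using assms
proof (induction r arbitrary: a)
  case 0
  then show ?case
    using dlcm_divide_in_Ints [of "a + 1" n] by simp
next
  case (Suc r)
  have "real (dlcm n) * (fact a * fact r / fact (a + r + 1)) \<in> \<int>"
      and "real (dlcm n) * (fact (Suc a) * fact r / fact (Suc a + r + 1)) \<in> \<int>"
    using Suc.prems by (intro Suc.IH; simp)+
  then show ?case
    unfolding beta_recurrence right_diff_distrib by (rule Ints_diff)
qed

lemma R3_factorization:
  assumes "k \<ge> 1" and "m2 < m1" and "k + m1 \<le> n"
  shows "R3 n k m1 m2 = (\<lambda>e.
      (real ((n - m1 - 1) choose (k - 1)) *
        (fact (m1 - m2 - 1) * fact (k + m2) / fact (k + m1))) *
      (normalized_pochhammer 1 (m1 - m2 - 1) e * normalized_pochhammer (-2) (k + m2) e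
         * normalized_pochhammer (-1) (n - m1 - 1) e
       / (normalized_pochhammer (-1) n e * normalized_pochhammer (-2) (k - 1) e
          * normalized_pochhammer (-1) (k + m1) e * normalized_pochhammer 1 (n - k - m1) e)))"
    (is "_ = (\<lambda>e. ?C * ?Q e)")
proof
  fix e :: real
  have poch: "pochhammer (1 + e) m = fact m * normalized_pochhammer 1 m e"
      "pochhammer (1 - 2 * e) m = fact m * normalized_pochhammer (-2) m e"
      "pochhammer (1 - e) m = fact m * normalized_pochhammer (-1) m e" for m
    by (simp_all add: normalized_pochhammer_def)
  have "R3 n k m1 m2 e =
      fact n * fact (m1 - m2 - 1) * fact (k + m2) * fact (n - m1 - 1)
        / (fact n * fact (k - 1) * fact (k + m1) * fact (n - k - m1)) * ?Q e"
    (is "_ = ?K * _")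
    unfolding R3_def poch by (simp add: divide_inverse mult_ac)
  also have "?K = ?C"
  proof -
    have "k - 1 \<le> n - m1 - 1" and "n - m1 - 1 - (k - 1) = n - k - m1"
      using assms by auto
    then show ?thesis
      by (simp add: binomial_fact field_simps)
  qed
  finally show "R3 n k m1 m2 e = ?C * ?Q e" .
qed

theorem mainTheorem17:
  fixes n k m1 m2 H :: nat
  assumes "k \<ge> 1" and "m2 < m1" and "m1 \<le> n - k" and "k \<le> n"
  shows "real (dlcm n) ^ (H + 1) * ((deriv ^^ H) (R3 n k m1 m2) 0 / fact H) \<in> \<int>"
proof -
  have km: "k + m1 \<le> n"
    using assms by simp
  have beta: "real (dlcm n) * (fact (m1 - m2 - 1) * fact (k + m2) / fact (k + m1)) \<in> \<int>"
    using dlcm_mult_beta_in_Ints [of "m1 - m2 - 1" "k + m2" n] assms by (simp add: ac_simps)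
  show ?thesis
  proof (rule higher_deriv_cmult_scaled_integer [OF R3_factorization [OF assms(1,2) km]], goal_cases)
    case 1
    from Ints_mult [OF Ints_of_nat beta, of "(n - m1 - 1) choose (k - 1)"] show ?case
      by (simp add: mult.left_commute)
  next
    case 2
    show ?case
      using km assms(2) by (intro has_scaled_integer_expansion_divide has_scaled_integer_expansion_mult
          has_scaled_integer_expansion_normalized_pochhammer) auto
  qed
qed

end
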